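(* Let \(m\) be a positive integer that is not a perfect square, let \(a,b,c\) be positive integers with \(\gcd(am,b^2-c^2m)=1\), and let \(A,B\in\mathbb Z\). If \(A\geq abm+acm-am-cm-b+1\) and \(B\geq acm+ab-a-b-c+1\), then there exist \(x,y,z,w\in\mathbb N\) with \(a\sqrt m(x+y\sqrt m)+(b+c\sqrt m)(z+w\sqrt m)=A+B\sqrt m\).
   Context: \(\mathbb N\) denotes the set of non-negative integers. *)

theory Defs
  imports Complex_Main
begin

end

theory Submission
  imports Defs
begin

text \<open>Write \<open>M = am\<close> and \<open>D = b\<^sup>2 - c\<^sup>2m\<close>. Comparing rational and irrational parts, the equation
  asks for \<open>A = amy + bz + cmw\<close> and \<open>B = ax + cz + bw\<close>. The linear map
  \<open>(z, w) \<mapsto> (bz + cmw, cz + bw)\<close> has determinant \<open>D\<close>, which is invertible modulo \<open>M\<close>; hence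
  \<open>z\<close> can be chosen in \<open>[0, am)\<close> and \<open>w\<close> in \<open>[0, a)\<close> so that both congruences hold. The lower
  bounds on \<open>A\<close> and \<open>B\<close> are exactly what forces the remaining quotients \<open>x, y\<close> to be
  nonnegative. Only this direction is needed.\<close>

lemma coprime_discriminant_reduced_representation:
  fixes a m b c A B :: int
  assumes "a > 0" "m > 0" and coprime: "gcd (a * m) (b\<^sup>2 - c\<^sup>2 * m) = 1"
  obtains t s z w where "0 \<le> z" "z < a * m" "0 \<le> w" "w < a"
    "A = a * m * t + b * z + c * m * w" "B = a * s + c * z + b * w"
proof -
  define M where "M = a * m"
  define D where "D = b\<^sup>2 - c\<^sup>2 * m"
  have "M > 0" using assms by (simp add: M_def)
  obtain v u where "v * M + u * D = 1"
    using bezout_int[of M D] coprime unfolding M_def D_def by auto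
  then have uD: "u * D = 1 - v * M" by linarith
  \<comment> \<open>\<open>(z0, w0)\<close> is the preimage of \<open>(A, B)\<close> under the adjugate, scaled by \<open>u = D\<^sup>-\<^sup>1 mod M\<close>.\<close>
  define z0 where "z0 = u * (b * A - c * m * B)"
  define w0 where "w0 = u * (b * B - c * A)"
  have "b * z0 + c * m * w0 = u * D * A" "c * z0 + b * w0 = u * D * B"
    unfolding z0_def w0_def D_def by (simp_all add: algebra_simps power2_eq_square)
  then have z0_image: "b * z0 + c * m * w0 = A - v * M * A"
    and w0_image: "c * z0 + b * w0 = B - v * M * B"
    unfolding uD by (simp_all add: algebra_simps)
  define z where "z = z0 mod M"
  define w where "w = w0 mod a"
  define k where "k = z0 div M"
  define l where "l = w0 div a"
  have z0_split: "z0 = z + M * k" and w0_split: "w0 = w + a * l"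
    unfolding z_def w_def k_def l_def by simp_all
  show thesis
  proof
    show "0 \<le> z" "z < a * m" using \<open>M > 0\<close> unfolding z_def M_def by simp_all
    show "0 \<le> w" "w < a" using \<open>a > 0\<close> unfolding w_def by simp_all
    show "A = a * m * (v * A + b * k + c * l) + b * z + c * m * w"
      using z0_image unfolding z0_split w0_split M_def by (simp add: algebra_simps)
    show "B = a * (v * m * B + c * m * k + b * l) + c * z + b * w"
      using w0_image unfolding z0_split w0_split M_def by (simp add: algebra_simps)
  qed
qed

lemma nonneg_if_mult_gt_neg:
  fixes M t :: int
  assumes "M > 0" "M * t > - M"
  shows "t \<ge> 0"
proof -
  have "-1 < t" using mult_less_cancel_left_pos[of M "-1" t] assms by simp
  then show ?thesis by simp
qed

lemma quadratic_integer_expansion: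
  fixes r :: "'a :: comm_ring"
  assumes "r * r = m"
  shows "a * r * (x + y * r) + (b + c * r) * (z + w * r)
       = (a * m * y + b * z + c * m * w) + (a * x + c * z + b * w) * r"
proof -
  have "a * r * (x + y * r) + (b + c * r) * (z + w * r)
       = (a * (r * r) * y + b * z + c * (r * r) * w) + (a * x + c * z + b * w) * r"
    by (simp add: algebra_simps)
  then show ?thesis unfolding assms .
qed

theorem theorem3:
  fixes m a b c :: nat and A B :: int
  assumes "m > 0" and "\<not> (\<exists>k::nat. m = k ^ 2)"
    and "a > 0" and "b > 0" and "c > 0"
    and "gcd (int a * int m) (int b ^ 2 - int c ^ 2 * int m) = 1"
    and "A \<ge> int a * int b * int m + int a * int c * int m - int a * int m - int c * int m - int b + 1"
    and "B \<ge> int a * int c * int m + int a * int b - int a - int b - int c + 1"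
  shows "\<exists>x y z w :: nat.
     real a * sqrt (real m) * (real x + real y * sqrt (real m))
       + (real b + real c * sqrt (real m)) * (real z + real w * sqrt (real m))
     = real_of_int A + real_of_int B * sqrt (real m)"
proof -
  obtain y x z w where z: "0 \<le> z" "z < int a * int m" and w: "0 \<le> w" "w < int a"
    and A: "A = int a * int m * y + int b * z + int c * int m * w"
    and B: "B = int a * x + int c * z + int b * w"
    by (rule coprime_discriminant_reduced_representation[OF _ _ assms(6)]) (use assms(1,3) in simp_all)
  have "int b * z \<le> int b * (int a * int m - 1)" "int c * z \<le> int c * (int a * int m - 1)"
    "int b * w \<le> int b * (int a - 1)" "int c * int m * w \<le> int c * int m * (int a - 1)"
    using z w by (simp_all add: mult_left_mono)
  then have "int a * int m * y > - (int a * int m)" and "int a * x > - int a"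
    using A B assms(7,8) by (simp_all add: algebra_simps)
  then have "y \<ge> 0" and "x \<ge> 0"
    using nonneg_if_mult_gt_neg assms(1,3) by (metis of_nat_0_less_iff mult_pos_pos)+
  then have "real a * sqrt (real m) * (real (nat x) + real (nat y) * sqrt (real m))
       + (real b + real c * sqrt (real m)) * (real (nat z) + real (nat w) * sqrt (real m))
     = real_of_int A + real_of_int B * sqrt (real m)"
    using z w unfolding A B
    by (simp add: quadratic_integer_expansion[of "sqrt (real m)" "real m"])
  then show ?thesis by blast
qed

end
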